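(* Assume (H3)–(H7). Let $r(t,x)\in\mathbb R$, $m(t,x)\in\mathbb R^d$, $e(t,x)\in\mathbb R$ be smooth functions of $(t,x)\in\mathbb R\times\mathbb R^d$, with enough integrability that all quantities below can be integrated against $\rho$, solving $$\partial_t r=\nabla_x^*\cdot m,\quad \partial_t m=-\nabla_x r+\sqrt{\tfrac2d}\,e\,\nabla_x\phi,\quad \partial_t e=-\sqrt{\tfrac2d}\,\nabla_x\cdot m,\quad \tfrac1{\sqrt{2d}}(\partial_t e)\,\mathrm{Id}_{d\times d}=-\nabla_x^{\mathrm{sym}}m,\quad \nabla_x e=0.$$ Then the matrix $A:=\langle\nabla_x^{\mathrm{skew}}m\rangle$ is skew-symmetric and independent of $t$, $r_0:=\langle r\rangle$ is independent of $t$, and with $b(t):=\langle m\rangle$, $c(t):=\langle e\rangle$, $$e(t,x)=c(t),\quad m(t,x)=Ax+b(t)-\tfrac1{\sqrt{2d}}c'(t)\,x,\quad r(t,x)=r_0-b'(t)\cdot x+\tfrac{\xi_2(x)}{2\sqrt{2d}}c''(t)+\sqrt{\tfrac2d}\,c(t)\,\xi_\phi(x),$$ and for all $(t,x)$, $$\tfrac{2\xi_\phi(x)+\nabla_x\phi(x)\cdot x-d}{\sqrt{2d}}\,c'+\tfrac{\xi_2(x)}{2\sqrt{2d}}\,c'''-\nabla_x\phi(x)\cdot b-b''\cdot x-\nabla_x\phi(x)\cdot Ax=0.$$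
   Context: $\phi\in C^2(\mathbb R^d)$, $\rho=e^{-\phi}$, with (H3) $\int\rho=1$, $\int x\rho\,dx=0$; (H4) for every $\varepsilon>0$ there is $C_\varepsilon$ with $|\nabla^2\phi|\le\varepsilon|\nabla\phi|^2+C_\varepsilon$; (H5) Poincaré inequality $c_P\int|\varphi-\langle\varphi\rangle|^2\rho\le\int|\nabla\varphi|^2\rho$; (H6) $\int(|x|^4+|\phi|^2+|\nabla\phi|^4)\rho<\infty$; (H7) $\int\nabla^2\phi\,\rho=\mathrm{Id}$. Here $\langle\varphi\rangle:=\int\varphi\rho\,dx$ (componentwise for vector/matrix valued functions). For a vector field $u$, $\nabla_x^*\cdot u:=-\nabla_x\cdot u+\nabla_x\phi\cdot u$. $(\nabla_x^{\mathrm{sym}}m)_{ij}=\frac12(\partial_jm_i+\partial_im_j)$, $(\nabla_x^{\mathrm{skew}}m)_{ij}=\frac12(\partial_jm_i-\partial_im_j)$. $\xi_2(x)=|x|^2-\langle|x|^2\rangle$, $\xi_\phi(x)=\phi(x)-\langle\phi\rangle$. *)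

theory Defs
  imports "HOL-Analysis.Analysis"
begin

text \<open>C-infinity: every iterated (Frechet) directional derivative exists everywhere.\<close>
definition smooth_fun :: "('a::euclidean_space \<Rightarrow> 'b::real_normed_vector) \<Rightarrow> bool" where
  "smooth_fun f \<longleftrightarrow>
     (\<forall>vs::'a list. \<forall>x. (foldr (\<lambda>v g y. frechet_derivative g (at y) v) vs f) differentiable (at x))"

definition grad :: "(real^'n \<Rightarrow> real) \<Rightarrow> real^'n \<Rightarrow> real^'n" where
  "grad f x = (\<chi> i. frechet_derivative f (at x) (axis i 1))"

definition jac :: "(real^'n \<Rightarrow> real^'m) \<Rightarrow> real^'n \<Rightarrow> real^'n^'m" where
  "jac u x = (\<chi> i j. frechet_derivative u (at x) (axis j 1) $ i)"

definition divg :: "(real^'n \<Rightarrow> real^'n) \<Rightarrow> real^'n \<Rightarrow> real" where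
  "divg u x = (\<Sum>i\<in>UNIV. jac u x $ i $ i)"

definition hess :: "(real^'n \<Rightarrow> real) \<Rightarrow> real^'n \<Rightarrow> real^'n^'n" where
  "hess f x = jac (grad f) x"

definition symgrad :: "(real^'n \<Rightarrow> real^'n) \<Rightarrow> real^'n \<Rightarrow> real^'n^'n" where
  "symgrad u x = (\<chi> i j. (jac u x $ i $ j + jac u x $ j $ i) / 2)"

definition skewgrad :: "(real^'n \<Rightarrow> real^'n) \<Rightarrow> real^'n \<Rightarrow> real^'n^'n" where
  "skewgrad u x = (\<chi> i j. (jac u x $ i $ j - jac u x $ j $ i) / 2)"

definition C1_fun :: "(real^'n \<Rightarrow> real) \<Rightarrow> bool" where
  "C1_fun f \<longleftrightarrow> (\<forall>x. f differentiable (at x)) \<and> continuous_on UNIV (grad f)"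

definition C2_fun :: "(real^'n \<Rightarrow> real) \<Rightarrow> bool" where
  "C2_fun f \<longleftrightarrow> (\<forall>x. f differentiable (at x)) \<and> (\<forall>x. grad f differentiable (at x))
                 \<and> continuous_on UNIV (hess f)"

definition rho :: "(real^'n \<Rightarrow> real) \<Rightarrow> real^'n \<Rightarrow> real" where
  "rho \<phi> x = exp (- \<phi> x)"

definition avg :: "(real^'n \<Rightarrow> real) \<Rightarrow> (real^'n \<Rightarrow> 'b::{banach,second_countable_topology}) \<Rightarrow> 'b" where
  "avg \<phi> f = (\<integral>x. rho \<phi> x *\<^sub>R f x \<partial>lborel)"

definition xi2 :: "(real^'n \<Rightarrow> real) \<Rightarrow> real^'n \<Rightarrow> real" where
  "xi2 \<phi> x = (norm x)^2 - avg \<phi> (\<lambda>y. (norm y)^2)"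

definition xiphi :: "(real^'n \<Rightarrow> real) \<Rightarrow> real^'n \<Rightarrow> real" where
  "xiphi \<phi> x = \<phi> x - avg \<phi> \<phi>"

end

(*
  Since e is constant in space, the symmetric-gradient equation says that each m(t, .) is a
  conformal Killing field with factor -c'(t)/sqrt(2d). Hence W(t, x) = m(t, x) - m(t, 0) +
  (c'(t)/sqrt(2d)) x satisfies (W y - W z).(y - z) = 0, which forces W(t, .) to be linear and
  skew: it is the matrix A(t). Inserting this into the equation for m_t exhibits the time
  derivative of W as minus the gradient of r + b'.x - c''|x|^2/(2 sqrt(2d)) - sqrt(2/d) c phi.
  A gradient field orthogonal to the position vector vanishes, so A is constant in time and r
  is this explicit quadratic potential. Finally the equation for r_t, averaged against rho with
  the integration-by-parts identities <grad phi> = 0 and <x_j d_i phi> = delta_ij, shows that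
  r0 has zero derivative, and what remains pointwise is the compatibility identity.
*)
theory Submission
  imports Defs
begin

section \<open>Integration by parts on Euclidean space\<close>

lemma lborel_integral_translate:
  fixes h :: "'a::euclidean_space \<Rightarrow> real"
  assumes "h \<in> borel_measurable borel"
  shows "(\<integral>x. h (x + c) \<partial>lborel) = (\<integral>x. h x \<partial>lborel)"
proof -
  have "(\<integral>x. h x \<partial>lborel) = (\<integral>x. h x \<partial>distr lborel borel ((+) c))"
    by (simp add: lborel_distr_plus)
  also have "\<dots> = (\<integral>x. h (c + x) \<partial>lborel)"
    by (rule integral_distr) (auto simp: assms)
  finally show ?thesis by (simp add: add.commute)
qed

lemma lborel_integrable_translate:
  fixes h :: "'a::euclidean_space \<Rightarrow> real"
  assumes "integrable lborel h"
  shows "integrable lborel (\<lambda>x. h (x + c))"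
proof -
  have "integrable (distr lborel borel ((+) c)) h"
    using assms by (simp add: lborel_distr_plus)
  then have "integrable lborel (\<lambda>x. h (c + x))"
    using borel_measurable_integrable[OF assms] by (subst (asm) integrable_distr_eq) auto
  then show ?thesis by (simp add: add.commute)
qed

lemma lborel_integral_segment_average:
  fixes D :: "'a::euclidean_space \<Rightarrow> real"
  assumes cont: "continuous_on UNIV D" and int: "integrable lborel D"
  shows "(\<integral>x. (\<integral>s. indicator {0..1} s * D (x + s *\<^sub>R u) \<partial>lborel) \<partial>lborel) = (\<integral>x. D x \<partial>lborel)"
proof -
  have pair: "pair_sigma_finite (lborel :: real measure) (lborel :: 'a measure)"
    by (simp add: pair_sigma_finite_def sigma_finite_lborel)
  define f where "f s x = indicator {0..1} s * D (x + s *\<^sub>R u)" for s :: real and x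
  have meas: "D \<in> borel_measurable borel"
    using cont by (rule borel_measurable_continuous_onI)
  have "(\<lambda>p::real \<times> 'a. indicator ({0..1} \<times> UNIV) p * D (snd p + fst p *\<^sub>R u)) \<in> borel_measurable borel"
    by (intro borel_measurable_times borel_measurable_indicator borel_closed closed_Times
        borel_measurable_continuous_onI continuous_on_compose2[OF cont])
       (auto intro!: continuous_intros)
  moreover have "indicator ({0..1} \<times> UNIV) p = (indicator {0..1} (fst p) :: real)" for p :: "real \<times> 'a"
    by (cases p) (simp add: indicator_def)
  ultimately have f_meas: "case_prod f \<in> borel_measurable (lborel \<Otimes>\<^sub>M lborel)"
    unfolding lborel_prod measurable_lborel1 by (simp add: f_def case_prod_beta')
  have slice: "(\<integral>x. f s x \<partial>lborel) = indicator {0..1} s * (\<integral>x. D x \<partial>lborel)" for s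
    unfolding f_def using lborel_integral_translate[OF meas, of "s *\<^sub>R u"] by simp
  have slice_norm: "(\<integral>x. norm (f s x) \<partial>lborel) = indicator {0..1} s * (\<integral>x. norm (D x) \<partial>lborel)" for s
  proof -
    have "(\<integral>x. norm (f s x) \<partial>lborel) = (\<integral>x. indicator {0..1} s * norm (D (x + s *\<^sub>R u)) \<partial>lborel)"
      by (auto simp: f_def indicator_def intro!: Bochner_Integration.integral_cong)
    then show ?thesis
      using lborel_integral_translate[of "\<lambda>x. norm (D x)" "s *\<^sub>R u"] meas by simp
  qed
  have "integrable (lborel \<Otimes>\<^sub>M lborel) (case_prod f)"
  proof (rule pair_sigma_finite.Fubini_integrable[OF pair f_meas])
    show "integrable lborel (\<lambda>s. \<integral>x. norm (case_prod f (s, x)) \<partial>lborel)"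
      unfolding case_prod_conv slice_norm by (intro integrable_mult_left integrable_real_indicator) auto
    show "AE s in lborel. integrable lborel (\<lambda>x. case_prod f (s, x))"
      using lborel_integrable_translate[OF int] by (simp add: f_def)
  qed
  then have "(\<integral>x. (\<integral>s. f s x \<partial>lborel) \<partial>lborel) = (\<integral>s. (\<integral>x. f s x \<partial>lborel) \<partial>lborel)"
    by (rule pair_sigma_finite.Fubini_integral[OF pair])
  then show ?thesis unfolding slice by (simp add: f_def)
qed

lemma lborel_integral_directional_derivative_eq_0:
  fixes G D :: "'a::euclidean_space \<Rightarrow> real"
  assumes cont: "continuous_on UNIV D"
    and deriv: "\<And>x s. ((\<lambda>s. G (x + s *\<^sub>R u)) has_real_derivative D (x + s *\<^sub>R u)) (at s)"
    and int_G: "integrable lborel G" and int_D: "integrable lborel D"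
  shows "(\<integral>x. D x \<partial>lborel) = 0"
proof -
  have FTC: "(\<integral>s. indicator {0..1} s * D (x + s *\<^sub>R u) \<partial>lborel) = G (x + u) - G x" for x
  proof -
    have "(\<integral>s. indicator {0..1} s *\<^sub>R D (x + s *\<^sub>R u) \<partial>lborel) = G (x + 1 *\<^sub>R u) - G (x + 0 *\<^sub>R u)"
    proof (rule integral_FTC_atLeastAtMost)
      show "((\<lambda>s. G (x + s *\<^sub>R u)) has_vector_derivative D (x + s *\<^sub>R u)) (at s within {0..1})" for s
        using deriv[of x s]
        by (simp add: has_real_derivative_iff_has_vector_derivative has_vector_derivative_at_within)
      show "continuous_on {0..1} (\<lambda>s. D (x + s *\<^sub>R u))"
        by (intro continuous_on_compose2[OF cont]) (auto intro!: continuous_intros)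
    qed simp
    then show ?thesis by simp
  qed
  have "(\<integral>x. D x \<partial>lborel) = (\<integral>x. G (x + u) \<partial>lborel) - (\<integral>x. G x \<partial>lborel)"
    using lborel_integral_segment_average[OF cont int_D, of u]
    unfolding FTC using lborel_integrable_translate[OF int_G] int_G by simp
  also have "\<dots> = 0"
    using lborel_integral_translate borel_measurable_integrable[OF int_G] by simp
  finally show ?thesis .
qed

section \<open>Smooth functions of time and space\<close>

lemma smooth_fun_differentiable: "smooth_fun F \<Longrightarrow> F differentiable (at y)"
  unfolding smooth_fun_def by (drule spec[of _ "[]"]) simp

lemma smooth_fun_frechet_derivative:
  assumes "smooth_fun F"
  shows "smooth_fun (\<lambda>y. frechet_derivative F (at y) v)"
  unfolding smooth_fun_def
proof (intro allI)
  fix vs x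
  show "foldr (\<lambda>v g y. frechet_derivative g (at y) v) vs (\<lambda>y. frechet_derivative F (at y) v) differentiable at x"
    using assms[unfolded smooth_fun_def, rule_format, of "vs @ [v]" x] by simp
qed

lemma has_vector_derivative_time_slice:
  fixes F :: "real \<times> 'a::euclidean_space \<Rightarrow> 'b::real_normed_vector"
  assumes "F differentiable (at (t, x))"
  shows "((\<lambda>s. F (s, x)) has_vector_derivative frechet_derivative F (at (t, x)) (1, 0)) (at t)"
proof -
  have D: "(F has_derivative frechet_derivative F (at (t, x))) (at (t, x))"
    using assms frechet_derivative_works by blast
  have "((\<lambda>s. (s, x)) has_derivative (\<lambda>h. (h, 0))) (at t)"
    by (auto intro!: derivative_eq_intros)
  then have "((\<lambda>s. F (s, x)) has_derivative (\<lambda>h. frechet_derivative F (at (t, x)) (h, 0))) (at t)"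
    using has_derivative_compose D by fastforce
  moreover have "(\<lambda>h. frechet_derivative F (at (t, x)) (h, 0)) = (\<lambda>h. h *\<^sub>R frechet_derivative F (at (t, x)) (1, 0))"
  proof
    fix h :: real
    have "(h, 0 :: 'a) = h *\<^sub>R (1, 0)" by simp
    then show "frechet_derivative F (at (t, x)) (h, 0) = h *\<^sub>R frechet_derivative F (at (t, x)) (1, 0)"
      using linear_cmul[OF has_derivative_linear[OF D]] by metis
  qed
  ultimately show ?thesis unfolding has_vector_derivative_def by simp
qed

lemma smooth_fun_has_vector_derivative_time:
  fixes F :: "real \<times> 'a::euclidean_space \<Rightarrow> 'b::real_normed_vector"
  assumes "smooth_fun F"
  shows "((\<lambda>s. F (s, x)) has_vector_derivative vector_derivative (\<lambda>s. F (s, x)) (at t)) (at t)"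
proof -
  have "((\<lambda>s. F (s, x)) has_vector_derivative frechet_derivative F (at (t, x)) (1, 0)) (at t)"
    by (rule has_vector_derivative_time_slice[OF smooth_fun_differentiable[OF assms]])
  then show ?thesis by (simp add: vector_derivative_at)
qed

lemma smooth_fun_time_vector_derivative:
  fixes F :: "real \<times> 'a::euclidean_space \<Rightarrow> 'b::real_normed_vector"
  assumes "smooth_fun F"
  shows "smooth_fun (\<lambda>(t, x). vector_derivative (\<lambda>s. F (s, x)) (at t))"
proof -
  have "vector_derivative (\<lambda>s. F (s, x)) (at t) = frechet_derivative F (at (t, x)) (1, 0)" for t x
    by (rule vector_derivative_at[OF has_vector_derivative_time_slice[OF smooth_fun_differentiable[OF assms]]])
  then have "(\<lambda>(t, x). vector_derivative (\<lambda>s. F (s, x)) (at t)) = (\<lambda>y. frechet_derivative F (at y) (1, 0))"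
    by (intro ext) (simp split: prod.splits)
  then show ?thesis using smooth_fun_frechet_derivative[OF assms] by simp
qed

lemma smooth_fun_deriv_time_eq:
  fixes F :: "real \<times> 'a::euclidean_space \<Rightarrow> real"
  assumes "smooth_fun F"
  shows "((\<lambda>s. F (s, x)) has_real_derivative vector_derivative (\<lambda>s. F (s, x)) (at t)) (at t)"
    and "deriv (\<lambda>s. F (s, x)) t = vector_derivative (\<lambda>s. F (s, x)) (at t)"
proof -
  show *: "((\<lambda>s. F (s, x)) has_real_derivative vector_derivative (\<lambda>s. F (s, x)) (at t)) (at t)"
    using smooth_fun_has_vector_derivative_time[OF assms]
    by (simp add: has_real_derivative_iff_has_vector_derivative)
  show "deriv (\<lambda>s. F (s, x)) t = vector_derivative (\<lambda>s. F (s, x)) (at t)"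
    by (rule DERIV_imp_deriv[OF *])
qed

lemma smooth_fun_has_real_derivative_time:
  fixes F :: "real \<times> 'a::euclidean_space \<Rightarrow> real"
  assumes "smooth_fun F"
  shows "((\<lambda>s. F (s, x)) has_real_derivative deriv (\<lambda>s. F (s, x)) t) (at t)"
  using smooth_fun_deriv_time_eq[OF assms] by simp

lemma smooth_fun_time_deriv:
  fixes F :: "real \<times> 'a::euclidean_space \<Rightarrow> real"
  assumes "smooth_fun F"
  shows "smooth_fun (\<lambda>(t, x). deriv (\<lambda>s. F (s, x)) t)"
  using smooth_fun_time_vector_derivative[OF assms] by (simp add: smooth_fun_deriv_time_eq(2)[OF assms])

lemma smooth_fun_differentiable_space:
  fixes F :: "real \<times> 'a::euclidean_space \<Rightarrow> 'b::real_normed_vector"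
  assumes "smooth_fun F"
  shows "(\<lambda>z. F (t, z)) differentiable (at x)"
proof -
  have "(F has_derivative frechet_derivative F (at (t, x))) (at (t, x))"
    using smooth_fun_differentiable[OF assms] frechet_derivative_works by blast
  moreover have "((\<lambda>z. (t, z)) has_derivative (\<lambda>v. (0, v))) (at x)"
    by (auto intro!: derivative_eq_intros)
  ultimately have "((\<lambda>z. F (t, z)) has_derivative (\<lambda>v. frechet_derivative F (at (t, x)) (0, v))) (at x)"
    using has_derivative_compose by fastforce
  then show ?thesis unfolding differentiable_def by blast
qed

lemma has_derivative_grad:
  fixes f :: "real^'n \<Rightarrow> real"
  assumes "f differentiable (at x)"
  shows "(f has_derivative (\<lambda>v. grad f x \<bullet> v)) (at x)"
proof -
  have D: "(f has_derivative frechet_derivative f (at x)) (at x)"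
    using assms frechet_derivative_works by blast
  have "frechet_derivative f (at x) v = grad f x \<bullet> v" for v
  proof -
    have "frechet_derivative f (at x) v = frechet_derivative f (at x) (\<Sum>i\<in>UNIV. v$i *\<^sub>R axis i 1)"
      using basis_expansion[of v] by (simp add: scalar_mult_eq_scaleR)
    also have "\<dots> = (\<Sum>i\<in>UNIV. v$i * frechet_derivative f (at x) (axis i 1))"
      using has_derivative_linear[OF D] by (simp add: linear_sum linear_cmul)
    finally show ?thesis by (simp add: grad_def inner_vec_def mult.commute)
  qed
  then have "frechet_derivative f (at x) = (\<lambda>v. grad f x \<bullet> v)" by blast
  then show ?thesis using D by simp
qed

lemma has_derivative_jac:
  fixes u :: "real^'n \<Rightarrow> real^'m"
  assumes "u differentiable (at x)"
  shows "(u has_derivative (\<lambda>v. jac u x *v v)) (at x)"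
proof -
  have D: "(u has_derivative frechet_derivative u (at x)) (at x)"
    using assms frechet_derivative_works by blast
  have "frechet_derivative u (at x) v = jac u x *v v" for v
  proof -
    have "frechet_derivative u (at x) v = frechet_derivative u (at x) (\<Sum>j\<in>UNIV. v$j *\<^sub>R axis j 1)"
      using basis_expansion[of v] by (simp add: scalar_mult_eq_scaleR)
    also have "\<dots> = (\<Sum>j\<in>UNIV. v$j *\<^sub>R frechet_derivative u (at x) (axis j 1))"
      using has_derivative_linear[OF D] by (simp add: linear_sum linear_cmul)
    finally show ?thesis by (simp add: jac_def matrix_vector_mult_def vec_eq_iff mult.commute)
  qed
  then have "frechet_derivative u (at x) = (\<lambda>v. jac u x *v v)" by blast
  then show ?thesis using D by simp
qed

lemma jac_eq_matrix:
  fixes u :: "real^'n \<Rightarrow> real^'m"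
  assumes "(u has_derivative (\<lambda>v. B *v v)) (at x)"
  shows "jac u x = B"
proof -
  have "frechet_derivative u (at x) = (\<lambda>v. B *v v)"
    using assms frechet_derivative_at by metis
  then show ?thesis
    by (simp add: jac_def vec_eq_iff matrix_vector_mult_basis column_def)
qed

section \<open>Conformal Killing fields\<close>

lemma isotropic_quadratic_form:
  fixes J :: "real^'n^'n"
  assumes "\<And>i j. (J$i$j + J$j$i) / 2 = \<mu> * (if i = j then 1 else 0)"
  shows "(J *v v) \<bullet> v = \<mu> * (v \<bullet> v)"
proof -
  have "(J *v v) \<bullet> v = (\<Sum>i\<in>UNIV. \<Sum>j\<in>UNIV. J$i$j * (v$i * v$j))"
    by (simp add: matrix_vector_mult_def inner_vec_def sum_distrib_right sum_distrib_left algebra_simps)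
  also have "\<dots> = (\<Sum>i\<in>UNIV. \<Sum>j\<in>UNIV. ((J$i$j + J$j$i) / 2) * (v$i * v$j))"
  proof -
    have "(\<Sum>i\<in>UNIV. \<Sum>j\<in>UNIV. J$j$i * (v$i * v$j)) = (\<Sum>i\<in>UNIV. \<Sum>j\<in>UNIV. J$i$j * (v$i * v$j))"
      by (subst sum.swap) (simp add: mult.commute)
    then show ?thesis
      by (simp add: sum.distrib sum_divide_distrib[symmetric] add_divide_distrib ring_distribs)
  qed
  also have "\<dots> = \<mu> * (v \<bullet> v)"
  proof -
    have "\<mu> * (if i = j then 1 else 0) * (v$i * v$j) = (if j = i then \<mu> * (v$i * v$j) else 0)" for i j
      by simp
    then show ?thesis unfolding assms by (simp add: inner_vec_def sum_distrib_left)
  qed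
  finally show ?thesis .
qed

lemma has_derivative_zero_along_segment_imp_eq:
  fixes g :: "'a::real_normed_vector \<Rightarrow> real"
  assumes deriv: "\<And>p. (g has_derivative G p) (at p)"
    and zero: "\<And>\<tau>::real. 0 < \<tau> \<Longrightarrow> \<tau> < 1 \<Longrightarrow> G (z + \<tau> *\<^sub>R v) v = 0"
  shows "g (z + v) = g z"
proof -
  have D: "((\<lambda>\<tau>. g (z + \<tau> *\<^sub>R v)) has_real_derivative G (z + \<tau> *\<^sub>R v) v) (at \<tau>)" for \<tau>
  proof -
    have "((\<lambda>\<tau>. z + \<tau> *\<^sub>R v) has_derivative (\<lambda>h. h *\<^sub>R v)) (at \<tau>)"
      by (auto intro!: derivative_eq_intros)
    then have "((\<lambda>\<tau>. g (z + \<tau> *\<^sub>R v)) has_derivative (\<lambda>h. G (z + \<tau> *\<^sub>R v) (h *\<^sub>R v))) (at \<tau>)"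
      using has_derivative_compose deriv by fastforce
    moreover have "h * G (z + \<tau> *\<^sub>R v) v = G (z + \<tau> *\<^sub>R v) (h *\<^sub>R v)" for h
      using linear_cmul[OF has_derivative_linear[OF deriv], of _ h v] by simp
    ultimately show ?thesis by (rule has_derivative_imp_has_field_derivative)
  qed
  have "g (z + 1 *\<^sub>R v) = g (z + 0 *\<^sub>R v)"
  proof (rule DERIV_isconst_end[of 0 1 "\<lambda>\<tau>. g (z + \<tau> *\<^sub>R v)"])
    show "continuous_on {0..1} (\<lambda>\<tau>. g (z + \<tau> *\<^sub>R v))"
      using D DERIV_continuous by (blast intro: continuous_at_imp_continuous_on)
    show "((\<lambda>\<tau>. g (z + \<tau> *\<^sub>R v)) has_real_derivative 0) (at \<tau>)" if "0 < \<tau>" "\<tau> < 1" for \<tau>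
      using D[of \<tau>] zero[OF that] by simp
  qed simp
  then show ?thesis by simp
qed

lemma conformal_Killing_difference_orthogonal:
  fixes m :: "'a::real_inner \<Rightarrow> 'a"
  assumes deriv: "\<And>p. (m has_derivative Dm p) (at p)"
    and conformal: "\<And>p v. Dm p v \<bullet> v = \<mu> * (v \<bullet> v)"
  shows "((m y - \<mu> *\<^sub>R y) - (m z - \<mu> *\<^sub>R z)) \<bullet> (y - z) = 0"
proof -
  let ?v = "y - z"
  have "(m (z + ?v) - \<mu> *\<^sub>R (z + ?v)) \<bullet> ?v = (m z - \<mu> *\<^sub>R z) \<bullet> ?v"
  proof (rule has_derivative_zero_along_segment_imp_eq[where g = "\<lambda>p. (m p - \<mu> *\<^sub>R p) \<bullet> ?v"])
    show "((\<lambda>p. (m p - \<mu> *\<^sub>R p) \<bullet> ?v) has_derivative (\<lambda>h. (Dm p h - \<mu> *\<^sub>R h) \<bullet> ?v)) (at p)" for p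
      using deriv[of p] by (auto intro!: derivative_eq_intros)
    show "(Dm (z + \<tau> *\<^sub>R ?v) ?v - \<mu> *\<^sub>R ?v) \<bullet> ?v = 0" for \<tau>
      using conformal by (simp add: inner_diff_left)
  qed
  then show ?thesis by (simp add: inner_diff_left)
qed

lemma skew_monotone_imp_linear:
  fixes W :: "'a::real_inner \<Rightarrow> 'a"
  assumes orth: "\<And>y z. (W y - W z) \<bullet> (y - z) = 0" and W0: "W 0 = 0"
  shows "linear W" and "W y \<bullet> z = - (W z \<bullet> y)"
proof -
  have self: "W y \<bullet> y = 0" for y using orth[of y 0] W0 by simp
  show skew: "W y \<bullet> z = - (W z \<bullet> y)" for y z
    using orth[of y z] self[of y] self[of z] by (simp add: inner_diff_left inner_diff_right inner_commute)
  have zero_if_orth_all: "q = 0" if "\<And>z. q \<bullet> z = 0" for q :: 'a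
    using that[of q] by simp
  have "W (a + b) - W a - W b = 0" for a b
    by (rule zero_if_orth_all)
       (simp add: inner_diff_left skew[of "a + b"] skew[of a] skew[of b] inner_add_right)
  moreover have "W (r *\<^sub>R a) - r *\<^sub>R W a = 0" for r a
    by (rule zero_if_orth_all) (simp add: inner_diff_left skew[of "r *\<^sub>R a"] skew[of a])
  ultimately show "linear W"
    by (intro linearI) (simp_all add: algebra_simps)
qed

lemma conformal_Killing_field_decomposition:
  fixes m :: "'a::real_inner \<Rightarrow> 'a"
  assumes "\<And>p. (m has_derivative Dm p) (at p)"
    and "\<And>p v. Dm p v \<bullet> v = \<mu> * (v \<bullet> v)"
  defines "W \<equiv> \<lambda>y. m y - m 0 - \<mu> *\<^sub>R y"
  shows "linear W" and "W y \<bullet> z = - (W z \<bullet> y)"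
proof -
  have "(W y - W z) \<bullet> (y - z) = 0" for y z
    using conformal_Killing_difference_orthogonal[OF assms(1,2), of y z] by (simp add: W_def algebra_simps)
  moreover have "W 0 = 0" by (simp add: W_def)
  ultimately show "linear W" "W y \<bullet> z = - (W z \<bullet> y)"
    by (rule skew_monotone_imp_linear)+
qed

lemma gradient_orthogonal_to_position_imp_constant:
  fixes g :: "'a::real_inner \<Rightarrow> real"
  assumes deriv: "\<And>p. (g has_derivative (\<lambda>v. N p \<bullet> v)) (at p)"
    and orth: "\<And>p. N p \<bullet> p = 0"
  shows "g x = g 0" and "N x = 0"
proof -
  have const: "g y = g 0" for y
  proof -
    have "g (0 + y) = g 0"
    proof (rule has_derivative_zero_along_segment_imp_eq[OF deriv])
      show "N (0 + \<tau> *\<^sub>R y) \<bullet> y = 0" if "0 < \<tau>" for \<tau>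
        using orth[of "\<tau> *\<^sub>R y"] that by simp
    qed
    then show ?thesis by simp
  qed
  then show "g x = g 0" .
  have "g = (\<lambda>_. g 0)" using const by blast
  then have "(g has_derivative (\<lambda>v. 0)) (at x)"
    by (metis has_derivative_const)
  then have "(\<lambda>v. N x \<bullet> v) = (\<lambda>v. 0)"
    using has_derivative_unique deriv by blast
  then show "N x = 0"
    by (metis inner_eq_zero_iff)
qed

section \<open>Moments of the reference density\<close>

lemma abs_le_one_plus_square: "\<bar>a::real\<bar> \<le> 1 + a\<^sup>2"
  using sum_squares_bound[of "\<bar>a\<bar>" 1] by (simp add: power2_eq_square)

lemma abs_mult_le_one_plus_fourth_powers:
  fixes a b :: real
  shows "\<bar>a * b\<bar> \<le> 1 + a ^ 4 + b ^ 4"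
proof -
  have "2 * (\<bar>a\<bar> * \<bar>b\<bar>) \<le> a\<^sup>2 + b\<^sup>2"
    using sum_squares_bound[of "\<bar>a\<bar>" "\<bar>b\<bar>"] by (simp add: mult.assoc)
  moreover have "a\<^sup>2 \<le> 1 + a ^ 4" "b\<^sup>2 \<le> 1 + b ^ 4"
    using abs_le_one_plus_square[of "a\<^sup>2"] abs_le_one_plus_square[of "b\<^sup>2"] by (simp_all add: power_even_eq)
  moreover have "0 \<le> a ^ 4" "0 \<le> b ^ 4"
    by (simp_all add: zero_le_even_power)
  ultimately show ?thesis unfolding abs_mult by linarith
qed

locale centered_density =
  fixes \<phi> :: "real^'n \<Rightarrow> real"
  assumes C2: "C2_fun \<phi>"
    and integral_rho: "(\<integral>x. rho \<phi> x \<partial>lborel) = 1"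
    and first_moment: "(\<integral>x. rho \<phi> x *\<^sub>R x \<partial>lborel) = 0"
    and fourth_moments: "integrable lborel (\<lambda>x. ((norm x)^4 + (\<phi> x)^2 + (norm (grad \<phi> x))^4) * rho \<phi> x)"
begin

lemma differentiable_phi: "\<phi> differentiable (at x)"
  using C2 unfolding C2_fun_def by blast

lemma continuous_on_phi: "continuous_on UNIV \<phi>"
  using differentiable_phi by (meson differentiable_at_imp_differentiable_on differentiable_imp_continuous_on)

lemma continuous_on_grad_phi: "continuous_on UNIV (grad \<phi>)"
  using C2 unfolding C2_fun_def
  by (meson differentiable_at_imp_differentiable_on differentiable_imp_continuous_on)

lemma continuous_on_rho: "continuous_on UNIV (rho \<phi>)"
  unfolding rho_def by (intro continuous_intros continuous_on_phi)

lemma integrable_rho: "integrable lborel (rho \<phi>)"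
  using integral_rho not_integrable_integral_eq by fastforce

definition moment_bound :: "real^'n \<Rightarrow> real" where
  "moment_bound x = 1 + (norm x)^4 + (\<phi> x)^2 + (norm (grad \<phi> x))^4"

lemma moment_bound_ge:
  shows "norm x \<le> 2 * moment_bound x" and "norm (grad \<phi> x) \<le> 2 * moment_bound x"
    and "norm x * norm (grad \<phi> x) \<le> moment_bound x" and "(norm x)\<^sup>2 \<le> 2 * moment_bound x"
    and "\<bar>\<phi> x\<bar> \<le> moment_bound x"
proof -
  have nonneg: "0 \<le> (norm x)^4" "0 \<le> (\<phi> x)^2" "0 \<le> (norm (grad \<phi> x))^4"
    by simp_all
  have "norm x \<le> 2 + (norm x)^4" "norm (grad \<phi> x) \<le> 2 + (norm (grad \<phi> x))^4"
    "norm x * norm (grad \<phi> x) \<le> 1 + (norm x)^4 + (norm (grad \<phi> x))^4"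
    "(norm x)\<^sup>2 \<le> 1 + 2 * (norm x)^4"
    using abs_mult_le_one_plus_fourth_powers[of "norm x" 1]
      abs_mult_le_one_plus_fourth_powers[of 1 "norm (grad \<phi> x)"]
      abs_mult_le_one_plus_fourth_powers[of "norm x" "norm (grad \<phi> x)"]
      abs_mult_le_one_plus_fourth_powers[of "norm x" "norm x"]
    by (simp_all add: power2_eq_square)
  note bounds = this nonneg abs_le_one_plus_square[of "\<phi> x"]
  show "norm x \<le> 2 * moment_bound x"
    unfolding moment_bound_def using bounds by (smt (verit))
  show "norm (grad \<phi> x) \<le> 2 * moment_bound x"
    unfolding moment_bound_def using bounds by (smt (verit))
  show "norm x * norm (grad \<phi> x) \<le> moment_bound x"
    unfolding moment_bound_def using bounds by (smt (verit))
  show "(norm x)\<^sup>2 \<le> 2 * moment_bound x"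
    unfolding moment_bound_def using bounds by (smt (verit))
  show "\<bar>\<phi> x\<bar> \<le> moment_bound x"
    unfolding moment_bound_def using bounds by (smt (verit))
qed

lemma integrable_rho_times:
  fixes f :: "real^'n \<Rightarrow> 'b::{banach, second_countable_topology}"
  assumes cont: "continuous_on UNIV f" and bound: "\<And>x. norm (f x) \<le> C * moment_bound x"
  shows "integrable lborel (\<lambda>x. rho \<phi> x *\<^sub>R f x)"
proof (rule Bochner_Integration.integrable_bound)
  have "integrable lborel (\<lambda>x. moment_bound x * rho \<phi> x)"
    using Bochner_Integration.integrable_add[OF integrable_rho fourth_moments]
    by (simp add: moment_bound_def algebra_simps)
  then show "integrable lborel (\<lambda>x. C * (moment_bound x * rho \<phi> x))"
    by (rule Bochner_Integration.integrable_mult_right)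
  have "continuous_on UNIV (\<lambda>x. rho \<phi> x *\<^sub>R f x)"
    by (intro continuous_intros continuous_on_rho cont)
  then show "(\<lambda>x. rho \<phi> x *\<^sub>R f x) \<in> borel_measurable lborel"
    using borel_measurable_continuous_onI by simp
  show "AE x in lborel. norm (rho \<phi> x *\<^sub>R f x) \<le> norm (C * (moment_bound x * rho \<phi> x))"
  proof (rule AE_I2)
    fix x
    have "norm (rho \<phi> x *\<^sub>R f x) \<le> C * (moment_bound x * rho \<phi> x)"
      using mult_right_mono[OF bound[of x], of "rho \<phi> x"] by (simp add: rho_def mult_ac)
    then show "norm (rho \<phi> x *\<^sub>R f x) \<le> norm (C * (moment_bound x * rho \<phi> x))"
      by (rule order_trans) simp
  qed
qed

lemma integrable_rho_coordinate: "integrable lborel (\<lambda>x. rho \<phi> x * x $ j)"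
  using integrable_rho_times[of "\<lambda>x. x $ j" 2] component_le_norm_cart moment_bound_ge(1)
  by (force intro: continuous_intros order_trans)

lemma integrable_rho_grad: "integrable lborel (\<lambda>x. rho \<phi> x * grad \<phi> x $ i)"
  using integrable_rho_times[of "\<lambda>x. grad \<phi> x $ i" 2] component_le_norm_cart moment_bound_ge(2)
  by (force intro: continuous_intros continuous_on_grad_phi order_trans)

lemma integrable_rho_coordinate_grad: "integrable lborel (\<lambda>x. rho \<phi> x * (x $ j * grad \<phi> x $ i))"
proof -
  have "\<bar>x $ j * grad \<phi> x $ i\<bar> \<le> 1 * moment_bound x" for x
  proof -
    have "\<bar>x $ j * grad \<phi> x $ i\<bar> \<le> norm x * norm (grad \<phi> x)"
      unfolding abs_mult by (intro mult_mono component_le_norm_cart) auto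
    then show ?thesis using moment_bound_ge(3)[of x] by simp
  qed
  then show ?thesis
    using integrable_rho_times[of "\<lambda>x. x $ j * grad \<phi> x $ i" 1]
    by (force intro: continuous_intros continuous_on_grad_phi)
qed

lemma integrable_rho_norm_squared: "integrable lborel (\<lambda>x. rho \<phi> x * (norm x)\<^sup>2)"
  using integrable_rho_times[of "\<lambda>x. (norm x)\<^sup>2" 2] moment_bound_ge(4)
  by (force intro: continuous_intros)

lemma integrable_rho_phi: "integrable lborel (\<lambda>x. rho \<phi> x * \<phi> x)"
  using integrable_rho_times[of \<phi> 1] moment_bound_ge(5) continuous_on_phi by force

lemma integrable_rho_scaleR_id: "integrable lborel (\<lambda>x. rho \<phi> x *\<^sub>R x)"
  using integrable_rho_times[of "\<lambda>x. x" 2] moment_bound_ge(1) by (force intro: continuous_intros)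

lemma has_real_derivative_phi_along_axis:
  "((\<lambda>s. \<phi> (x + s *\<^sub>R axis i 1)) has_real_derivative grad \<phi> (x + s *\<^sub>R axis i 1) $ i) (at s)"
proof -
  have "((\<lambda>s. x + s *\<^sub>R axis i 1) has_derivative (\<lambda>h. h *\<^sub>R axis i 1)) (at s)"
    by (auto intro!: derivative_eq_intros)
  then have "((\<lambda>s. \<phi> (x + s *\<^sub>R axis i 1)) has_derivative
      (\<lambda>h. grad \<phi> (x + s *\<^sub>R axis i 1) \<bullet> (h *\<^sub>R axis i 1))) (at s)"
    using has_derivative_compose has_derivative_grad[OF differentiable_phi] by fastforce
  then show ?thesis
    by (rule has_derivative_imp_has_field_derivative) (simp add: inner_axis)
qed

lemma integral_rho_grad: "(\<integral>x. rho \<phi> x * grad \<phi> x $ i \<partial>lborel) = 0"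
proof -
  have "(\<integral>x. - (rho \<phi> x * grad \<phi> x $ i) \<partial>lborel) = 0"
  proof (rule lborel_integral_directional_derivative_eq_0[where G = "rho \<phi>" and u = "axis i 1"])
    show "continuous_on UNIV (\<lambda>x. - (rho \<phi> x * grad \<phi> x $ i))"
      by (intro continuous_intros continuous_on_rho continuous_on_grad_phi)
    show "((\<lambda>s. rho \<phi> (x + s *\<^sub>R axis i 1)) has_real_derivative
            - (rho \<phi> (x + s *\<^sub>R axis i 1) * grad \<phi> (x + s *\<^sub>R axis i 1) $ i)) (at s)" for x s
      unfolding rho_def using has_real_derivative_phi_along_axis
      by (auto intro!: derivative_eq_intros)
  qed (use integrable_rho integrable_rho_grad in simp_all)
  then show ?thesis by simp
qed

lemma integral_rho_coordinate_grad:
  "(\<integral>x. rho \<phi> x * (x $ j * grad \<phi> x $ i) \<partial>lborel) = (if i = j then 1 else 0)"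
proof -
  let ?\<delta> = "(if i = j then 1 else 0) :: real"
  have "(\<integral>x. ?\<delta> * rho \<phi> x - rho \<phi> x * (x $ j * grad \<phi> x $ i) \<partial>lborel) = 0"
  proof (rule lborel_integral_directional_derivative_eq_0[where G = "\<lambda>x. rho \<phi> x * x $ j" and u = "axis i 1"])
    show "continuous_on UNIV (\<lambda>x. ?\<delta> * rho \<phi> x - rho \<phi> x * (x $ j * grad \<phi> x $ i))"
      by (intro continuous_intros continuous_on_rho continuous_on_grad_phi)
    show "((\<lambda>s. rho \<phi> (x + s *\<^sub>R axis i 1) * (x + s *\<^sub>R axis i 1) $ j) has_real_derivative
            ?\<delta> * rho \<phi> (x + s *\<^sub>R axis i 1)
            - rho \<phi> (x + s *\<^sub>R axis i 1) * ((x + s *\<^sub>R axis i 1) $ j * grad \<phi> (x + s *\<^sub>R axis i 1) $ i)) (at s)"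
      for x s
    proof -
      have "axis i 1 $ j = ?\<delta>"
        by (simp add: axis_def)
      then have "((\<lambda>s. x $ j + s * axis i 1 $ j) has_real_derivative ?\<delta>) (at s)"
        by (auto intro!: derivative_eq_intros)
      then have "((\<lambda>s. (x + s *\<^sub>R axis i 1) $ j) has_real_derivative ?\<delta>) (at s)"
        by simp
      then show ?thesis
        unfolding rho_def using has_real_derivative_phi_along_axis
        by (auto intro!: derivative_eq_intros simp: algebra_simps simp del: vector_add_component)
    qed
  qed (use integrable_rho integrable_rho_coordinate integrable_rho_coordinate_grad in simp_all)
  then show ?thesis
    using integrable_rho integrable_rho_coordinate_grad integral_rho by simp
qed

lemma has_bochner_integral_rho: "has_bochner_integral lborel (rho \<phi>) 1"
  using integrable_rho integral_rho by (simp add: has_bochner_integral_iff)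

lemma has_bochner_integral_rho_scaleR_id: "has_bochner_integral lborel (\<lambda>x. rho \<phi> x *\<^sub>R x) 0"
  using integrable_rho_scaleR_id first_moment by (simp add: has_bochner_integral_iff)

lemma has_bochner_integral_rho_xi2: "has_bochner_integral lborel (\<lambda>x. rho \<phi> x * xi2 \<phi> x) 0"
proof -
  have "has_bochner_integral lborel (\<lambda>x. rho \<phi> x * (norm x)\<^sup>2 - avg \<phi> (\<lambda>y. (norm y)\<^sup>2) * rho \<phi> x)
          (avg \<phi> (\<lambda>y. (norm y)\<^sup>2) - avg \<phi> (\<lambda>y. (norm y)\<^sup>2) * 1)"
    using integrable_rho_norm_squared
    by (intro has_bochner_integral_diff has_bochner_integral_mult_right has_bochner_integral_rho)
       (simp add: has_bochner_integral_iff avg_def)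
  then show ?thesis by (simp add: xi2_def algebra_simps)
qed

lemma has_bochner_integral_rho_xiphi: "has_bochner_integral lborel (\<lambda>x. rho \<phi> x * xiphi \<phi> x) 0"
proof -
  have "has_bochner_integral lborel (\<lambda>x. rho \<phi> x * \<phi> x - avg \<phi> \<phi> * rho \<phi> x) (avg \<phi> \<phi> - avg \<phi> \<phi> * 1)"
    using integrable_rho_phi
    by (intro has_bochner_integral_diff has_bochner_integral_mult_right has_bochner_integral_rho)
       (simp add: has_bochner_integral_iff avg_def)
  then show ?thesis by (simp add: xiphi_def algebra_simps)
qed

lemma has_bochner_integral_rho_grad_inner: "has_bochner_integral lborel (\<lambda>x. rho \<phi> x * (grad \<phi> x \<bullet> v)) 0"
proof -
  have "has_bochner_integral lborel (\<lambda>x. \<Sum>i\<in>UNIV. v $ i * (rho \<phi> x * grad \<phi> x $ i)) (\<Sum>i\<in>UNIV. v $ i * 0)"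
    using integrable_rho_grad integral_rho_grad
    by (intro has_bochner_integral_sum has_bochner_integral_mult_right) (simp add: has_bochner_integral_iff)
  then show ?thesis
    by (simp add: inner_vec_def sum_distrib_left mult_ac)
qed

lemma has_bochner_integral_rho_grad_inner_matrix:
  "has_bochner_integral lborel (\<lambda>x. rho \<phi> x * (grad \<phi> x \<bullet> (B *v x))) (\<Sum>i\<in>UNIV. B $ i $ i)"
proof -
  have "has_bochner_integral lborel (\<lambda>x. \<Sum>i\<in>UNIV. \<Sum>j\<in>UNIV. B $ i $ j * (rho \<phi> x * (x $ j * grad \<phi> x $ i)))
          (\<Sum>i\<in>UNIV. \<Sum>j\<in>UNIV. B $ i $ j * (if i = j then 1 else 0))"
    using integrable_rho_coordinate_grad integral_rho_coordinate_grad
    by (intro has_bochner_integral_sum has_bochner_integral_mult_right) (simp add: has_bochner_integral_iff)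
  moreover have "B $ i $ j * (if i = j then 1 else 0) = (if j = i then B $ i $ j else 0)" for i j
    by simp
  ultimately show ?thesis
    by (simp add: inner_vec_def matrix_vector_mult_def sum_distrib_left mult_ac)
qed

lemma avg_const: "avg \<phi> (\<lambda>x. v) = v"
proof -
  have "has_bochner_integral lborel (\<lambda>x. rho \<phi> x *\<^sub>R v) (1 *\<^sub>R v)"
    by (intro has_bochner_integral_scaleR_left has_bochner_integral_rho)
  then show ?thesis by (simp add: avg_def has_bochner_integral_integral_eq)
qed

lemma avg_affine: "avg \<phi> (\<lambda>x. B *v x + v) = v"
proof -
  have "has_bochner_integral lborel (\<lambda>x. B *v (rho \<phi> x *\<^sub>R x) + rho \<phi> x *\<^sub>R v) (B *v 0 + 1 *\<^sub>R v)"
    by (intro has_bochner_integral_add has_bochner_integral_scaleR_left has_bochner_integral_rho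
        has_bochner_integral_bounded_linear[OF matrix_vector_mul_bounded_linear] has_bochner_integral_rho_scaleR_id)
  then show ?thesis
    unfolding avg_def by (simp add: has_bochner_integral_integral_eq scaleR_right_distrib matrix_vector_mult_scaleR)
qed

lemma avg_quadratic_potential:
  "avg \<phi> (\<lambda>x. \<alpha> - v \<bullet> x + \<beta> * (norm x)\<^sup>2 + \<gamma> * \<phi> x)
     = \<alpha> + \<beta> * avg \<phi> (\<lambda>x. (norm x)\<^sup>2) + \<gamma> * avg \<phi> \<phi>"
proof -
  have "has_bochner_integral lborel
      (\<lambda>x. \<alpha> * rho \<phi> x - v \<bullet> (rho \<phi> x *\<^sub>R x) + \<beta> * (rho \<phi> x * (norm x)\<^sup>2) + \<gamma> * (rho \<phi> x * \<phi> x))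
      (\<alpha> * 1 - v \<bullet> 0 + \<beta> * avg \<phi> (\<lambda>x. (norm x)\<^sup>2) + \<gamma> * avg \<phi> \<phi>)"
    using integrable_rho_norm_squared integrable_rho_phi
    by (intro has_bochner_integral_add has_bochner_integral_diff has_bochner_integral_mult_right
        has_bochner_integral_inner_right has_bochner_integral_rho has_bochner_integral_rho_scaleR_id)
       (simp_all add: has_bochner_integral_iff avg_def)
  then show ?thesis
    unfolding avg_def by (simp add: has_bochner_integral_integral_eq algebra_simps)
qed

lemma has_bochner_integral_rho_compatibility_expression:
  "has_bochner_integral lborel
     (\<lambda>x. rho \<phi> x * ((2 * xiphi \<phi> x + grad \<phi> x \<bullet> x - CARD('n)) * \<alpha> + xi2 \<phi> x * \<beta>
                      - grad \<phi> x \<bullet> v - w \<bullet> x - grad \<phi> x \<bullet> (B *v x)))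
     (- (\<Sum>i\<in>UNIV. B $ i $ i))"
proof -
  have "has_bochner_integral lborel
     (\<lambda>x. \<alpha> * (2 * (rho \<phi> x * xiphi \<phi> x) + rho \<phi> x * (grad \<phi> x \<bullet> ((mat 1 :: real^'n^'n) *v x)) - real CARD('n) * rho \<phi> x)
        + \<beta> * (rho \<phi> x * xi2 \<phi> x) - rho \<phi> x * (grad \<phi> x \<bullet> v) - w \<bullet> (rho \<phi> x *\<^sub>R x)
        - rho \<phi> x * (grad \<phi> x \<bullet> (B *v x)))
     (\<alpha> * (2 * 0 + (\<Sum>i\<in>UNIV. (mat 1 :: real^'n^'n) $ i $ i) - real CARD('n) * 1) + \<beta> * 0 - 0 - w \<bullet> 0
        - (\<Sum>i\<in>UNIV. B $ i $ i))"
    by (intro has_bochner_integral_add has_bochner_integral_diff has_bochner_integral_mult_right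
        has_bochner_integral_inner_right has_bochner_integral_rho has_bochner_integral_rho_scaleR_id has_bochner_integral_rho_xi2
        has_bochner_integral_rho_xiphi has_bochner_integral_rho_grad_inner has_bochner_integral_rho_grad_inner_matrix)
  moreover have "(\<Sum>i\<in>UNIV. (mat 1 :: real^'n^'n) $ i $ i) = real CARD('n)"
    by (simp add: mat_def)
  ultimately show ?thesis
    by (simp add: matrix_vector_mul_lid algebra_simps)
qed

end

section \<open>The linearized system\<close>

lemma sqrt_two_div_eq: "sqrt (2 / real n) = 2 / sqrt (real (2 * n))"
proof (cases "n = 0")
  case False
  have "sqrt (2 / real n) * sqrt (real (2 * n)) = 2"
    using False by (simp add: real_sqrt_mult[symmetric])
  then show ?thesis using False by (simp add: field_simps)
qed simp

locale linearized_system = centered_density \<phi> for \<phi> :: "real^'n \<Rightarrow> real" +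
  fixes r :: "real \<Rightarrow> real^'n \<Rightarrow> real"
    and m :: "real \<Rightarrow> real^'n \<Rightarrow> real^'n"
    and e :: "real \<Rightarrow> real^'n \<Rightarrow> real"
  assumes r_smooth: "smooth_fun (\<lambda>(t, x). r t x)"
    and m_smooth: "smooth_fun (\<lambda>(t, x). m t x)"
    and e_smooth: "smooth_fun (\<lambda>(t, x). e t x)"
    and r_evolution: "\<And>t x. deriv (\<lambda>s. r s x) t = - divg (m t) x + grad \<phi> x \<bullet> m t x"
    and m_evolution: "\<And>t x. vector_derivative (\<lambda>s. m s x) (at t)
                 = - grad (r t) x + (sqrt (2 / CARD('n)) * e t x) *\<^sub>R grad \<phi> x"
    and conformal: "\<And>t x. (1 / sqrt (2 * CARD('n)) * deriv (\<lambda>s. e s x) t) *\<^sub>R (mat 1 :: real^'n^'n)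
                 = - symgrad (m t) x"
    and grad_e: "\<And>t x. grad (e t) x = 0"
begin

abbreviation c :: "real \<Rightarrow> real" where "c t \<equiv> avg \<phi> (e t)"
abbreviation b :: "real \<Rightarrow> real^'n" where "b t \<equiv> avg \<phi> (m t)"
abbreviation A :: "real \<Rightarrow> real^'n^'n" where "A t \<equiv> avg \<phi> (skewgrad (m t))"
abbreviation r0 :: "real \<Rightarrow> real" where "r0 t \<equiv> avg \<phi> (r t)"
abbreviation dilation :: "real \<Rightarrow> real" where "dilation t \<equiv> deriv c t / sqrt (2 * CARD('n))"

lemma differentiable_r: "r t differentiable (at x)"
  using smooth_fun_differentiable_space[OF r_smooth, of t x] by simp

lemma differentiable_m: "m t differentiable (at x)"
  using smooth_fun_differentiable_space[OF m_smooth, of t x] by simp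

lemma differentiable_e: "e t differentiable (at x)"
  using smooth_fun_differentiable_space[OF e_smooth, of t x] by simp

lemma e_eq_c: "e t x = c t"
proof -
  have "(e t has_derivative (\<lambda>v. 0)) (at z within UNIV)" for z
    using has_derivative_grad[OF differentiable_e] grad_e by simp
  then obtain C where "\<forall>x\<in>UNIV. e t x = C"
    using has_derivative_zero_constant[of UNIV "e t"] by auto
  then have "e t = (\<lambda>x. C)" by auto
  then show ?thesis by (simp add: avg_const)
qed

lemma c_eq: "c = (\<lambda>t. e t 0)"
  using e_eq_c by simp

lemma deriv_e: "deriv (\<lambda>s. e s x) t = deriv c t"
  using e_eq_c by simp

lemma c_has_derivatives:
  shows "(c has_real_derivative deriv c t) (at t)"
    and "(deriv c has_real_derivative deriv (deriv c) t) (at t)"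
    and "(deriv (deriv c) has_real_derivative deriv (deriv (deriv c)) t) (at t)"
proof -
  note E1 = smooth_fun_time_deriv[OF e_smooth]
  note E2 = smooth_fun_time_deriv[OF E1]
  show "(c has_real_derivative deriv c t) (at t)"
    using smooth_fun_has_real_derivative_time[OF e_smooth, of 0 t] by (simp add: c_eq)
  show "(deriv c has_real_derivative deriv (deriv c) t) (at t)"
    using smooth_fun_has_real_derivative_time[OF E1, of 0 t] by (simp add: c_eq)
  show "(deriv (deriv c) has_real_derivative deriv (deriv (deriv c)) t) (at t)"
    using smooth_fun_has_real_derivative_time[OF E2, of 0 t] by (simp add: c_eq)
qed

lemma symgrad_m:
  "(jac (m t) x $ i $ j + jac (m t) x $ j $ i) / 2 = - dilation t * (if i = j then 1 else 0)"
proof -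
  have "((1 / sqrt (2 * CARD('n)) * deriv (\<lambda>s. e s x) t) *\<^sub>R (mat 1 :: real^'n^'n)) $ i $ j
      = (- symgrad (m t) x) $ i $ j"
    using conformal[where t = t and x = x] by simp
  then show ?thesis by (simp add: deriv_e mat_def symgrad_def)
qed

definition rotation :: "real \<Rightarrow> real^'n \<Rightarrow> real^'n" where
  "rotation t y = m t y - m t 0 + dilation t *\<^sub>R y"

lemma rotation_linear: "linear (rotation t)"
  and rotation_skew: "rotation t y \<bullet> z = - (rotation t z \<bullet> y)"
proof -
  have rotation_eq: "rotation t = (\<lambda>y. m t y - m t 0 - (- dilation t) *\<^sub>R y)"
    by (simp add: rotation_def fun_eq_iff)
  have "(jac (m t) p *v v) \<bullet> v = (- dilation t) * (v \<bullet> v)" for p v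
    by (rule isotropic_quadratic_form) (simp add: symgrad_m)
  note Killing = conformal_Killing_field_decomposition[OF has_derivative_jac[OF differentiable_m] this]
  show "linear (rotation t)"
    unfolding rotation_eq by (rule Killing(1))
  show "rotation t y \<bullet> z = - (rotation t z \<bullet> y)"
    unfolding rotation_eq by (rule Killing(2))
qed

lemma rotation_matrix_skew: "matrix (rotation t) $ i $ j = - (matrix (rotation t) $ j $ i)"
  using rotation_skew[of t "axis j 1" "axis i 1"] by (simp add: matrix_def inner_axis)

lemma m_eq_affine: "m t = (\<lambda>x. (matrix (rotation t) - dilation t *\<^sub>R mat 1) *v x + m t 0)"
proof
  fix x
  have "matrix (rotation t) *v x = m t x - m t 0 + dilation t *\<^sub>R x"
    using fun_cong[OF matrix_vector_mul(2)[OF rotation_linear], of t x] by (simp add: rotation_def)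
  then show "m t x = (matrix (rotation t) - dilation t *\<^sub>R mat 1) *v x + m t 0"
    by (simp add: matrix_vector_mult_diff_rdistrib matrix_scaleR_vector_ac[symmetric])
qed

lemma jac_m: "jac (m t) x = matrix (rotation t) - dilation t *\<^sub>R mat 1"
proof (rule jac_eq_matrix)
  show "(m t has_derivative (*v) (matrix (rotation t) - dilation t *\<^sub>R mat 1)) (at x)"
    by (subst m_eq_affine)
       (auto intro!: derivative_eq_intros bounded_linear_imp_has_derivative matrix_vector_mul_bounded_linear)
qed

lemma rotation_matrix_diag: "matrix (rotation t) $ i $ i = 0"
  using rotation_matrix_skew[of t i i] by simp

lemma A_eq: "A t = matrix (rotation t)"
proof -
  have "skewgrad (m t) x $ i $ j = matrix (rotation t) $ i $ j" for x i j
    using rotation_matrix_skew[of t j i] by (simp add: skewgrad_def jac_m mat_def)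
  then have "skewgrad (m t) = (\<lambda>x. matrix (rotation t))"
    by (simp add: vec_eq_iff fun_eq_iff)
  then show ?thesis by (simp add: avg_const)
qed

lemma A_skew: "transpose (A t) = - A t"
proof -
  have "transpose (A t) $ i $ j = (- A t) $ i $ j" for i j
    using rotation_matrix_skew[of t j i] by (simp add: A_eq transpose_def)
  then show ?thesis by (simp add: vec_eq_iff)
qed

lemma b_eq: "b t = m t 0"
  by (subst m_eq_affine) (rule avg_affine)

lemma m_affine: "m t x = A t *v x + b t - dilation t *\<^sub>R x"
  by (subst m_eq_affine)
     (simp add: A_eq b_eq matrix_vector_mult_diff_rdistrib matrix_scaleR_vector_ac[symmetric])

lemma divg_m: "divg (m t) x = - real CARD('n) * dilation t"
  by (simp add: divg_def jac_m mat_def rotation_matrix_diag)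

lemma m_time_derivatives:
  shows "((\<lambda>s. m s x) has_vector_derivative vector_derivative (\<lambda>s. m s x) (at t)) (at t)"
    and "((\<lambda>s. vector_derivative (\<lambda>\<sigma>. m \<sigma> x) (at s)) has_vector_derivative
           vector_derivative (\<lambda>s. vector_derivative (\<lambda>\<sigma>. m \<sigma> x) (at s)) (at t)) (at t)"
  using smooth_fun_has_vector_derivative_time[OF m_smooth, of x t]
    smooth_fun_has_vector_derivative_time[OF smooth_fun_time_vector_derivative[OF m_smooth], of x t]
  by simp_all

lemma b_has_derivatives:
  shows "(b has_vector_derivative vector_derivative b (at t)) (at t)"
    and "((\<lambda>s. vector_derivative b (at s)) has_vector_derivative
           vector_derivative (\<lambda>s. vector_derivative b (at s)) (at t)) (at t)"
  using m_time_derivatives[of 0 t] by (simp_all add: b_eq)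

lemma rotation_has_time_derivative:
  "((\<lambda>s. rotation s x) has_vector_derivative
     vector_derivative (\<lambda>s. m s x) (at t) - vector_derivative b (at t) + (deriv (deriv c) t / sqrt (2 * CARD('n))) *\<^sub>R x) (at t)"
proof -
  have "(dilation has_real_derivative deriv (deriv c) t / sqrt (2 * CARD('n))) (at t)"
    by (rule DERIV_cdivide[OF c_has_derivatives(2)])
  then have "((\<lambda>s. m s x - m s 0 + dilation s *\<^sub>R x) has_vector_derivative
      vector_derivative (\<lambda>s. m s x) (at t) - vector_derivative (\<lambda>s. m s 0) (at t)
        + (dilation t *\<^sub>R 0 + (deriv (deriv c) t / sqrt (2 * CARD('n))) *\<^sub>R x)) (at t)"
    by (intro has_vector_derivative_add has_vector_derivative_diff m_time_derivatives(1)
        has_vector_derivative_scaleR has_vector_derivative_const)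
  then show ?thesis by (simp add: rotation_def[abs_def] b_eq)
qed

lemma dt_rotation_orthogonal:
  "(vector_derivative (\<lambda>s. m s p) (at t) - vector_derivative b (at t)
      + (deriv (deriv c) t / sqrt (2 * CARD('n))) *\<^sub>R p) \<bullet> p = 0"
    (is "?N \<bullet> p = 0")
proof -
  have "((\<lambda>s. rotation s p) has_derivative (\<lambda>h. h *\<^sub>R ?N)) (at t)"
    using rotation_has_time_derivative[of p t] unfolding has_vector_derivative_def .
  then have "((\<lambda>s. rotation s p \<bullet> p) has_derivative (\<lambda>h. (h *\<^sub>R ?N) \<bullet> p)) (at t)"
    by (rule has_derivative_inner_left)
  then have "((\<lambda>s. rotation s p \<bullet> p) has_real_derivative ?N \<bullet> p) (at t)"
    by (rule has_derivative_imp_has_field_derivative) simp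
  moreover have "(\<lambda>s. rotation s p \<bullet> p) = (\<lambda>s. 0)"
    using rotation_skew[of _ p p] by (simp add: fun_eq_iff)
  ultimately have "((\<lambda>s. 0) has_real_derivative ?N \<bullet> p) (at t)"
    by simp
  then show ?thesis
    by (rule DERIV_unique[OF _ DERIV_const])
qed

lemma r_quadratic_potential: "r t x = r t 0 - sqrt (2 / CARD('n)) * c t * \<phi> 0 - vector_derivative b (at t) \<bullet> x
           + deriv (deriv c) t / (2 * sqrt (2 * CARD('n))) * (norm x)\<^sup>2 + sqrt (2 / CARD('n)) * c t * \<phi> x"
    (is ?r)
  and dt_m_affine: "vector_derivative (\<lambda>s. m s x) (at t)
           = vector_derivative b (at t) - (deriv (deriv c) t / sqrt (2 * CARD('n))) *\<^sub>R x"
    (is ?m)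
proof -
  define \<beta> where "\<beta> = deriv (deriv c) t / sqrt (2 * CARD('n))"
  define a where "a = sqrt (2 / CARD('n))"
  define N where "N p = vector_derivative (\<lambda>s. m s p) (at t) - vector_derivative b (at t) + \<beta> *\<^sub>R p" for p
  define g where "g p = r t p + vector_derivative b (at t) \<bullet> p - \<beta> / 2 * (p \<bullet> p) - a * c t * \<phi> p" for p
  have "(g has_derivative (\<lambda>v. (- N p) \<bullet> v)) (at p)" for p
  proof -
    have "(g has_derivative (\<lambda>v. grad (r t) p \<bullet> v + vector_derivative b (at t) \<bullet> v
            - \<beta> / 2 * (p \<bullet> v + v \<bullet> p) - a * c t * (grad \<phi> p \<bullet> v))) (at p)"
      unfolding g_def[abs_def]
      using has_derivative_grad[OF differentiable_r] has_derivative_grad[OF differentiable_phi]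
      by (auto intro!: derivative_eq_intros)
    moreover have "grad (r t) p \<bullet> v + vector_derivative b (at t) \<bullet> v
            - \<beta> / 2 * (p \<bullet> v + v \<bullet> p) - a * c t * (grad \<phi> p \<bullet> v) = (- N p) \<bullet> v" for v
    proof -
      have grad_r: "grad (r t) p = (a * c t) *\<^sub>R grad \<phi> p - vector_derivative (\<lambda>s. m s p) (at t)"
        using m_evolution[where t = t and x = p] by (simp add: a_def e_eq_c)
      have "\<beta> / 2 * (p \<bullet> v + v \<bullet> p) = \<beta> * (p \<bullet> v)"
        by (simp add: inner_commute)
      moreover have "grad (r t) p \<bullet> v = a * c t * (grad \<phi> p \<bullet> v) - vector_derivative (\<lambda>s. m s p) (at t) \<bullet> v"
        by (simp add: grad_r inner_diff_left)
      moreover have "(- N p) \<bullet> v = vector_derivative b (at t) \<bullet> v - vector_derivative (\<lambda>s. m s p) (at t) \<bullet> v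
          - \<beta> * (p \<bullet> v)"
        by (simp add: N_def inner_diff_left inner_add_left)
      ultimately show ?thesis by linarith
    qed
    ultimately show ?thesis by simp
  qed
  moreover have "(- N p) \<bullet> p = 0" for p
    using dt_rotation_orthogonal[of p t] unfolding inner_minus_left N_def \<beta>_def by simp
  ultimately have "g x = g 0" and "- N x = 0"
    by (rule gradient_orthogonal_to_position_imp_constant)+
  then show ?r and ?m
    by (simp_all add: g_def N_def a_def \<beta>_def power2_norm_eq_inner algebra_simps)
qed

lemma A_const: "A t = A s"
proof -
  have "((\<lambda>s. rotation s x) has_derivative (\<lambda>h. 0)) (at t within UNIV)" for x t
    using rotation_has_time_derivative[of x t] dt_m_affine[of x t]
    by (simp add: has_vector_derivative_def)
  then have "rotation t x = rotation s x" for x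
    using has_derivative_zero_constant[of UNIV "\<lambda>s. rotation s x"] by (metis UNIV_I convex_UNIV)
  then have "rotation t = rotation s" by (simp add: fun_eq_iff)
  then show ?thesis by (simp add: A_eq)
qed

lemma r_eq:
  "r t x = r0 t - vector_derivative b (at t) \<bullet> x
     + xi2 \<phi> x / (2 * sqrt (2 * CARD('n))) * deriv (deriv c) t
     + sqrt (2 / CARD('n)) * c t * xiphi \<phi> x"
proof -
  define \<alpha> where "\<alpha> = r t 0 - sqrt (2 / CARD('n)) * c t * \<phi> 0"
  define \<beta> where "\<beta> = deriv (deriv c) t / (2 * sqrt (2 * CARD('n)))"
  define \<gamma> where "\<gamma> = sqrt (2 / CARD('n)) * c t"
  have "r t = (\<lambda>x. \<alpha> - vector_derivative b (at t) \<bullet> x + \<beta> * (norm x)\<^sup>2 + \<gamma> * \<phi> x)"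
  proof
    fix x
    show "r t x = \<alpha> - vector_derivative b (at t) \<bullet> x + \<beta> * (norm x)\<^sup>2 + \<gamma> * \<phi> x"
      using r_quadratic_potential[of t x] by (simp add: \<alpha>_def \<beta>_def \<gamma>_def)
  qed
  then have "r0 t = \<alpha> + \<beta> * avg \<phi> (\<lambda>x. (norm x)\<^sup>2) + \<gamma> * avg \<phi> \<phi>"
    using avg_quadratic_potential by simp
  then show ?thesis
    using r_quadratic_potential[of t x]
    by (simp add: xi2_def xiphi_def \<alpha>_def \<beta>_def \<gamma>_def algebra_simps diff_divide_distrib)
qed

lemma r_has_time_derivative: "((\<lambda>s. r s x) has_real_derivative deriv (\<lambda>s. r s x) t) (at t)"
  using smooth_fun_has_real_derivative_time[OF r_smooth, of x t] by simp

lemma r0_has_derivative: "(r0 has_real_derivative deriv r0 t) (at t)"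
proof -
  define \<kappa>\<^sub>2 where "\<kappa>\<^sub>2 = xi2 \<phi> 0 / (2 * sqrt (2 * CARD('n)))"
  define \<kappa>\<^sub>\<phi> where "\<kappa>\<^sub>\<phi> = sqrt (2 / CARD('n)) * xiphi \<phi> 0"
  have "r0 = (\<lambda>s. r s 0 - \<kappa>\<^sub>2 * deriv (deriv c) s - \<kappa>\<^sub>\<phi> * c s)"
    by (simp add: fun_eq_iff r_eq[of _ 0] \<kappa>\<^sub>2_def \<kappa>\<^sub>\<phi>_def)
  moreover have "((\<lambda>s. r s 0 - \<kappa>\<^sub>2 * deriv (deriv c) s - \<kappa>\<^sub>\<phi> * c s) has_real_derivative
      deriv (\<lambda>s. r s 0) t - \<kappa>\<^sub>2 * deriv (deriv (deriv c)) t - \<kappa>\<^sub>\<phi> * deriv c t) (at t)"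
    by (intro DERIV_diff DERIV_cmult r_has_time_derivative c_has_derivatives)
  ultimately have D: "(r0 has_real_derivative
      deriv (\<lambda>s. r s 0) t - \<kappa>\<^sub>2 * deriv (deriv (deriv c)) t - \<kappa>\<^sub>\<phi> * deriv c t) (at t)"
    by simp
  then show ?thesis by (simp add: DERIV_imp_deriv[OF D])
qed

lemma deriv_r:
  "deriv (\<lambda>s. r s x) t = deriv r0 t - vector_derivative (\<lambda>s. vector_derivative b (at s)) (at t) \<bullet> x
     + xi2 \<phi> x / (2 * sqrt (2 * CARD('n))) * deriv (deriv (deriv c)) t
     + sqrt (2 / CARD('n)) * deriv c t * xiphi \<phi> x"
proof -
  define \<kappa>\<^sub>2 where "\<kappa>\<^sub>2 = xi2 \<phi> x / (2 * sqrt (2 * CARD('n)))"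
  define \<kappa>\<^sub>\<phi> where "\<kappa>\<^sub>\<phi> = sqrt (2 / CARD('n)) * xiphi \<phi> x"
  have "((\<lambda>s. vector_derivative b (at s) \<bullet> x) has_real_derivative
          vector_derivative (\<lambda>s. vector_derivative b (at s)) (at t) \<bullet> x) (at t)"
    using has_derivative_inner_left[OF b_has_derivatives(2)[unfolded has_vector_derivative_def], of x t]
    by (rule has_derivative_imp_has_field_derivative) simp
  then have D: "((\<lambda>s. r0 s - vector_derivative b (at s) \<bullet> x + \<kappa>\<^sub>2 * deriv (deriv c) s + \<kappa>\<^sub>\<phi> * c s)
      has_real_derivative deriv r0 t - vector_derivative (\<lambda>s. vector_derivative b (at s)) (at t) \<bullet> x
        + \<kappa>\<^sub>2 * deriv (deriv (deriv c)) t + \<kappa>\<^sub>\<phi> * deriv c t) (at t)"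
    by (intro DERIV_add DERIV_diff DERIV_cmult r0_has_derivative c_has_derivatives)
  have "(\<lambda>s. r s x) = (\<lambda>s. r0 s - vector_derivative b (at s) \<bullet> x + \<kappa>\<^sub>2 * deriv (deriv c) s + \<kappa>\<^sub>\<phi> * c s)"
    by (simp add: fun_eq_iff r_eq[of _ x] \<kappa>\<^sub>2_def \<kappa>\<^sub>\<phi>_def)
  then have "deriv (\<lambda>s. r s x) t = deriv r0 t - vector_derivative (\<lambda>s. vector_derivative b (at s)) (at t) \<bullet> x
        + \<kappa>\<^sub>2 * deriv (deriv (deriv c)) t + \<kappa>\<^sub>\<phi> * deriv c t"
    using DERIV_imp_deriv[OF D] by simp
  then show ?thesis by (simp add: \<kappa>\<^sub>2_def \<kappa>\<^sub>\<phi>_def mult_ac)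
qed

lemma deriv_r0_eq:
  "deriv r0 t = - ((2 * xiphi \<phi> x + grad \<phi> x \<bullet> x - CARD('n)) / sqrt (2 * CARD('n)) * deriv c t
                 + xi2 \<phi> x / (2 * sqrt (2 * CARD('n))) * deriv (deriv (deriv c)) t
                 - grad \<phi> x \<bullet> b t
                 - vector_derivative (\<lambda>s. vector_derivative b (at s)) (at t) \<bullet> x
                 - grad \<phi> x \<bullet> (A t *v x))"
proof -
  let ?b'' = "vector_derivative (\<lambda>s. vector_derivative b (at s)) (at t)"
  let ?Q = "xi2 \<phi> x / (2 * sqrt (2 * CARD('n))) * deriv (deriv (deriv c)) t"
  have half: "sqrt (2 / CARD('n)) * deriv c t = 2 * dilation t"
    by (simp add: sqrt_two_div_eq)
  have "deriv r0 t = deriv (\<lambda>s. r s x) t + ?b'' \<bullet> x - ?Q - 2 * dilation t * xiphi \<phi> x"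
    using deriv_r[of x t] half by simp
  also have "\<dots> = real CARD('n) * dilation t + grad \<phi> x \<bullet> (A t *v x) + grad \<phi> x \<bullet> b t
      - dilation t * (grad \<phi> x \<bullet> x) + ?b'' \<bullet> x - ?Q - 2 * dilation t * xiphi \<phi> x"
    using r_evolution[where t = t and x = x] by (simp add: divg_m m_affine inner_diff_right inner_add_right)
  also have "\<dots> = - ((2 * xiphi \<phi> x + grad \<phi> x \<bullet> x - CARD('n)) * dilation t + ?Q
      - grad \<phi> x \<bullet> b t - ?b'' \<bullet> x - grad \<phi> x \<bullet> (A t *v x))"
    by (simp add: algebra_simps add_divide_distrib diff_divide_distrib)
  finally show ?thesis by (simp only: times_divide_eq_left times_divide_eq_right)
qed

lemma deriv_r0_eq_0: "deriv r0 t = 0"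
proof -
  have "has_bochner_integral lborel
     (\<lambda>x. rho \<phi> x * ((2 * xiphi \<phi> x + grad \<phi> x \<bullet> x - CARD('n)) * (deriv c t / sqrt (2 * CARD('n)))
        + xi2 \<phi> x * (deriv (deriv (deriv c)) t / (2 * sqrt (2 * CARD('n)))) - grad \<phi> x \<bullet> b t
        - vector_derivative (\<lambda>s. vector_derivative b (at s)) (at t) \<bullet> x - grad \<phi> x \<bullet> (A t *v x)))
     (- (\<Sum>i\<in>UNIV. A t $ i $ i))"
    by (rule has_bochner_integral_rho_compatibility_expression)
  moreover have "(\<Sum>i\<in>UNIV. A t $ i $ i) = 0"
    by (simp add: A_eq rotation_matrix_diag)
  moreover have "(2 * xiphi \<phi> y + grad \<phi> y \<bullet> y - CARD('n)) * (deriv c t / sqrt (2 * CARD('n)))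
        + xi2 \<phi> y * (deriv (deriv (deriv c)) t / (2 * sqrt (2 * CARD('n)))) - grad \<phi> y \<bullet> b t
        - vector_derivative (\<lambda>s. vector_derivative b (at s)) (at t) \<bullet> y - grad \<phi> y \<bullet> (A t *v y)
      = - deriv r0 t" for y
    using deriv_r0_eq[of t y] by (simp only: times_divide_eq_left times_divide_eq_right)
  ultimately have "has_bochner_integral lborel (\<lambda>x. rho \<phi> x * (- deriv r0 t)) 0"
    by simp
  moreover have "has_bochner_integral lborel (\<lambda>x. rho \<phi> x * (- deriv r0 t)) (1 * (- deriv r0 t))"
    by (intro has_bochner_integral_mult_left has_bochner_integral_rho)
  ultimately show ?thesis
    using has_bochner_integral_eq by force
qed

lemma compatibility_condition:
  "(2 * xiphi \<phi> x + grad \<phi> x \<bullet> x - CARD('n)) / sqrt (2 * CARD('n)) * deriv c t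
     + xi2 \<phi> x / (2 * sqrt (2 * CARD('n))) * deriv (deriv (deriv c)) t
     - grad \<phi> x \<bullet> b t
     - vector_derivative (\<lambda>s. vector_derivative b (at s)) (at t) \<bullet> x
     - grad \<phi> x \<bullet> (A t *v x) = 0"
  using deriv_r0_eq[of t x] deriv_r0_eq_0[of t] by simp

lemma r0_const: "r0 t = r0 s"
  using r0_has_derivative deriv_r0_eq_0 by (metis DERIV_isconst_all)

end

theorem proposition2p1:
  fixes \<phi> :: "real^'n \<Rightarrow> real"
    and r :: "real \<Rightarrow> real^'n \<Rightarrow> real"
    and m :: "real \<Rightarrow> real^'n \<Rightarrow> real^'n"
    and e :: "real \<Rightarrow> real^'n \<Rightarrow> real"
  assumes phi_C2: "C2_fun \<phi>"
    and H3a: "(\<integral>x. rho \<phi> x \<partial>lborel) = 1"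
    and H3b: "(\<integral>x. rho \<phi> x *\<^sub>R x \<partial>lborel) = 0"
    and H4: "\<forall>\<epsilon>>0. \<exists>C. \<forall>x. norm (hess \<phi> x) \<le> \<epsilon> * (norm (grad \<phi> x))^2 + C"
    and H5: "\<exists>cP>0. \<forall>f. C1_fun f \<and> integrable lborel (\<lambda>x. (f x)^2 * rho \<phi> x)
                 \<and> integrable lborel (\<lambda>x. (norm (grad f x))^2 * rho \<phi> x)
               \<longrightarrow> cP * avg \<phi> (\<lambda>x. (f x - avg \<phi> f)^2) \<le> avg \<phi> (\<lambda>x. (norm (grad f x))^2)"
    and H6: "integrable lborel
               (\<lambda>x. ((norm x)^4 + (\<phi> x)^2 + (norm (grad \<phi> x))^4) * rho \<phi> x)"
    and H7: "avg \<phi> (hess \<phi>) = mat 1"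
    and r_smooth: "smooth_fun (\<lambda>(t, x). r t x)"
    and m_smooth: "smooth_fun (\<lambda>(t, x). m t x)"
    and e_smooth: "smooth_fun (\<lambda>(t, x). e t x)"
    and eq1: "\<And>t x. deriv (\<lambda>s. r s x) t = - divg (m t) x + grad \<phi> x \<bullet> m t x"
    and eq2: "\<And>t x. vector_derivative (\<lambda>s. m s x) (at t)
                 = - grad (r t) x + (sqrt (2 / CARD('n)) * e t x) *\<^sub>R grad \<phi> x"
    and eq3: "\<And>t x. deriv (\<lambda>s. e s x) t = - sqrt (2 / CARD('n)) * divg (m t) x"
    and eq4: "\<And>t x. (1 / sqrt (2 * CARD('n)) * deriv (\<lambda>s. e s x) t) *\<^sub>R (mat 1 :: real^'n^'n)
                 = - symgrad (m t) x"
    and eq5: "\<And>t x. grad (e t) x = 0"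
  defines "A \<equiv> \<lambda>t. avg \<phi> (skewgrad (m t))"
    and "r0 \<equiv> \<lambda>t. avg \<phi> (r t)"
    and "b \<equiv> \<lambda>t. avg \<phi> (m t)"
    and "c \<equiv> \<lambda>t. avg \<phi> (e t)"
  shows "(\<forall>t. transpose (A t) = - A t)
       \<and> (\<forall>t s. A t = A s)
       \<and> (\<forall>t s. r0 t = r0 s)
       \<and> (\<forall>t x. e t x = c t)
       \<and> (\<forall>t x. m t x = A t *v x + b t - (deriv c t / sqrt (2 * CARD('n))) *\<^sub>R x)
       \<and> (\<forall>t x. r t x = r0 t - vector_derivative b (at t) \<bullet> x
                 + xi2 \<phi> x / (2 * sqrt (2 * CARD('n))) * deriv (deriv c) t
                 + sqrt (2 / CARD('n)) * c t * xiphi \<phi> x)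
       \<and> (\<forall>t x. (2 * xiphi \<phi> x + grad \<phi> x \<bullet> x - CARD('n)) / sqrt (2 * CARD('n)) * deriv c t
                 + xi2 \<phi> x / (2 * sqrt (2 * CARD('n))) * deriv (deriv (deriv c)) t
                 - grad \<phi> x \<bullet> b t
                 - vector_derivative (\<lambda>s. vector_derivative b (at s)) (at t) \<bullet> x
                 - grad \<phi> x \<bullet> (A t *v x) = 0)"
proof -
  interpret S: linearized_system \<phi> r m e
    by unfold_locales (fact phi_C2 H3a H3b H6 r_smooth m_smooth e_smooth eq1 eq2 eq4 eq5)+
  show ?thesis
    unfolding A_def r0_def b_def c_def
    by (intro conjI allI S.A_skew S.A_const S.r0_const S.e_eq_c S.m_affine S.r_eq
        S.compatibility_condition)
qed

end
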